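(* Suppose actions are chosen by contextual GP-TS-SDF: given $\mathcal{F}_{t-1}$, sample $g_t\sim\mathcal{GP}(\mu_{t-1}(\cdot,\cdot),\nu_t^2\sigma^2_{t-1}(\cdot,\cdot))$ and select $x_t\in\arg\max_{x\in\mathcal{Q}}g_t(z_t,x)$ for the given context $z_t$. Let $r_t=g(z_t,x_t^\star)-g(z_t,x_t)$ with $x_t^\star\in\arg\max_{x\in\mathcal{Q}}g(z_t,x)$. For any filtration $\mathcal{F}_{t-1}$ and given context $z_t$, conditioned on the event $E^f(t)$, $$\mathbb{E}[r_t\mid\mathcal{F}_{t-1}]\le\frac{11c_t}{\rho_mp}\mathbb{E}[\sigma_{t-1}(z_t,x_t)\mid\mathcal{F}_{t-1}]+\frac{2\mathcal{B}_f}{t^2},\qquad p=\frac{1}{4e\sqrt{\pi}}.$$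
   Context: Setting (contextual GP bandits with delayed feedback). $\mathcal{Q}\subset\mathbb{R}^n$ finite action set, $\mathcal{Z}\subset\mathbb{R}^{n'}$ finite context set. $k$ a positive semidefinite kernel on $\mathcal{Z}\times\mathcal{Q}$ with $k\le1$; $g$ in its RKHS with $\|g\|_k\le\mathcal{B}_f$. In round $t$ the environment gives a context $z_t$, the learner selects $x_t\in\mathcal{Q}$ and gets $y_t=g(z_t,x_t)+\epsilon_t$ ($R$-sub-Gaussian $\epsilon_t$, $|y_t|\le\mathcal{B}_y$), observed after a random delay $d_t\in\{0,1,\ldots\}$ drawn from $\mathcal{D}$. For an integer $m\ge1$, $\rho_m=\mathbb{P}(d_s\le m)$, $\tilde y_{s,t}=y_s\mathbb{1}\{d_s\le\min(m,t-s)\}$. With $\lambda>0$, $w_i=(z_i,x_i)$, $w=(z,x)$: $\mu_{t-1}(w)=\mathbf{k}_{t-1}(w)^\top(\mathbf{K}_{t-1}+\lambda I)^{-1}\tilde{\mathbf{y}}_{t-1}$, $\sigma^2_{t-1}(w,w')=k(w,w')-\mathbf{k}_{t-1}(w)^\top(\mathbf{K}_{t-1}+\lambda I)^{-1}\mathbf{k}_{t-1}(w')$, $\sigma^2_{t-1}(w)=\sigma^2_{t-1}(w,w)$, $\mathbf{k}_{t-1}(w)=(k(w,w_i))_{i\le t-1}$, $\mathbf{K}_{t-1}=(k(w_i,w_j))_{i,j\le t-1}$, $\tilde{\mathbf{y}}_{t-1}=(\tilde y_{s,t})_{s\le t-1}$. $\gamma_t=\max_A\frac12\log\det(I+\lambda^{-1}\mathbf{K}_A)$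 over collections of $t$ points of $\mathcal{Z}\times\mathcal{Q}$. For $\delta\in(0,1)$: $\beta_t=\mathcal{B}_f+(R+\mathcal{B}_y)\sqrt{2(\gamma_{t-1}+1+\log(4/\delta))}$, $\nu_t=\mathcal{B}_y\sum_{s=t-m}^{t-1}\sigma_{t-1}(z_s,x_s)+\beta_t$ (terms with $s<1$ omitted), $c_t=\nu_t(1+\sqrt{2\log(|\mathcal{Z}||\mathcal{Q}|t^2)})$. $\mathcal{F}_{t-1}$: history up to round $t-1$. $E^f(t)$: the event that $|\mu_{t-1}(z,x)-\rho_mg(z,x)|\le\nu_t\sigma_{t-1}(z,x)$ for all $z\in\mathcal{Z},x\in\mathcal{Q}$. *)

theory Defs
  imports "HOL-Probability.Probability" "Jordan_Normal_Form.Gauss_Jordan_Elimination"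
    "Jordan_Normal_Form.Determinant"
begin

definition psd_kernel :: "'w set \<Rightarrow> ('w \<Rightarrow> 'w \<Rightarrow> real) \<Rightarrow> bool" where
  "psd_kernel W k \<longleftrightarrow> (\<forall>u\<in>W. \<forall>v\<in>W. k u v = k v u) \<and>
     (\<forall>ws :: 'w list. \<forall>a :: nat \<Rightarrow> real. set ws \<subseteq> W \<longrightarrow>
        (\<Sum>i<length ws. \<Sum>j<length ws. a i * a j * k (ws ! i) (ws ! j)) \<ge> 0)"

text \<open>On a finite domain W the RKHS of k is the span of the kernel sections
  k(.,v), v in W, with squared norm of sum_v alpha_v k(.,v) equal to
  sum_{u,v} alpha_u alpha_v k(u,v).  "g in H_k with norm at most B" (as a function on W).\<close>
definition rkhs_norm_le :: "'w set \<Rightarrow> ('w \<Rightarrow> 'w \<Rightarrow> real) \<Rightarrow> ('w \<Rightarrow> real) \<Rightarrow> real \<Rightarrow> bool" where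
  "rkhs_norm_le W k g B \<longleftrightarrow> (\<exists>\<alpha> :: 'w \<Rightarrow> real.
      (\<forall>w\<in>W. g w = (\<Sum>v\<in>W. \<alpha> v * k w v)) \<and>
      sqrt (\<Sum>u\<in>W. \<Sum>v\<in>W. \<alpha> u * \<alpha> v * k u v) \<le> B)"

text \<open>Data points ws (list, entry i is w_{i+1}); kernel matrix and vector.\<close>
definition kmat :: "('w \<Rightarrow> 'w \<Rightarrow> real) \<Rightarrow> 'w list \<Rightarrow> real mat" where
  "kmat k ws = mat (length ws) (length ws) (\<lambda>(i, j). k (ws ! i) (ws ! j))"

definition kvec :: "('w \<Rightarrow> 'w \<Rightarrow> real) \<Rightarrow> 'w list \<Rightarrow> 'w \<Rightarrow> real vec" where
  "kvec k ws w = vec (length ws) (\<lambda>i. k w (ws ! i))"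

text \<open>(K + lambda I)^{-1}; this matrix is invertible for lambda > 0 and psd K.\<close>
definition reg_inv :: "('w \<Rightarrow> 'w \<Rightarrow> real) \<Rightarrow> real \<Rightarrow> 'w list \<Rightarrow> real mat" where
  "reg_inv k lam ws = the (mat_inverse (kmat k ws + lam \<cdot>\<^sub>m 1\<^sub>m (length ws)))"

definition post_mean :: "('w \<Rightarrow> 'w \<Rightarrow> real) \<Rightarrow> real \<Rightarrow> 'w list \<Rightarrow> real list \<Rightarrow> 'w \<Rightarrow> real" where
  "post_mean k lam ws ys w = kvec k ws w \<bullet> (reg_inv k lam ws *\<^sub>v vec_of_list ys)"

definition post_cov :: "('w \<Rightarrow> 'w \<Rightarrow> real) \<Rightarrow> real \<Rightarrow> 'w list \<Rightarrow> 'w \<Rightarrow> 'w \<Rightarrow> real" where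
  "post_cov k lam ws w w' = k w w' - kvec k ws w \<bullet> (reg_inv k lam ws *\<^sub>v kvec k ws w')"

definition post_sd :: "('w \<Rightarrow> 'w \<Rightarrow> real) \<Rightarrow> real \<Rightarrow> 'w list \<Rightarrow> 'w \<Rightarrow> real" where
  "post_sd k lam ws w = sqrt (post_cov k lam ws w w)"

definition max_info_gain :: "'w set \<Rightarrow> ('w \<Rightarrow> 'w \<Rightarrow> real) \<Rightarrow> real \<Rightarrow> nat \<Rightarrow> real" where
  "max_info_gain W k lam t = Max {(1/2) * ln (det (1\<^sub>m t + (1 / lam) \<cdot>\<^sub>m kmat k A)) | A.
       set A \<subseteq> W \<and> length A = t}"

definition gaussian_rv :: "'a measure \<Rightarrow> ('a \<Rightarrow> real) \<Rightarrow> real \<Rightarrow> real \<Rightarrow> bool" where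
  "gaussian_rv M X m v \<longleftrightarrow> X \<in> borel_measurable M \<and>
     ((v = 0 \<and> (AE \<omega> in M. X \<omega> = m)) \<or>
      (v > 0 \<and> distributed M lborel X (normal_density m (sqrt v))))"

definition gaussian_process :: "'a measure \<Rightarrow> ('a \<Rightarrow> 'w \<Rightarrow> real) \<Rightarrow> 'w set \<Rightarrow>
    ('w \<Rightarrow> real) \<Rightarrow> ('w \<Rightarrow> 'w \<Rightarrow> real) \<Rightarrow> bool" where
  "gaussian_process M G W mu C \<longleftrightarrow>
     (\<forall>a :: 'w \<Rightarrow> real. gaussian_rv M (\<lambda>\<omega>. \<Sum>w\<in>W. a w * G \<omega> w)
        (\<Sum>w\<in>W. a w * mu w) (\<Sum>u\<in>W. \<Sum>v\<in>W. a u * a v * C u v))"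

text \<open>History w_1..w_{t-1} (round s stored at list index s-1).\<close>
definition hist :: "(nat \<Rightarrow> 'z) \<Rightarrow> (nat \<Rightarrow> 'q) \<Rightarrow> nat \<Rightarrow> ('z \<times> 'q) list" where
  "hist zh xh t = map (\<lambda>s. (zh s, xh s)) [1..<t]"

definition tilde_obs :: "(nat \<Rightarrow> real) \<Rightarrow> (nat \<Rightarrow> nat) \<Rightarrow> nat \<Rightarrow> nat \<Rightarrow> real list" where
  "tilde_obs y d m t = map (\<lambda>s. if d s \<le> min m (t - s) then y s else 0) [1..<t]"

definition beta_t :: "'w set \<Rightarrow> ('w \<Rightarrow> 'w \<Rightarrow> real) \<Rightarrow> real \<Rightarrow> real \<Rightarrow> real \<Rightarrow> real \<Rightarrow> real \<Rightarrow> nat \<Rightarrow> real" where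
  "beta_t W k lam Bf R By \<delta> t =
     Bf + (R + By) * sqrt (2 * (max_info_gain W k lam (t - 1) + 1 + ln (4 / \<delta>)))"

definition nu_t :: "'z set \<Rightarrow> 'q set \<Rightarrow> ('z \<times> 'q \<Rightarrow> 'z \<times> 'q \<Rightarrow> real) \<Rightarrow> real \<Rightarrow> real \<Rightarrow> real
    \<Rightarrow> real \<Rightarrow> real \<Rightarrow> (nat \<Rightarrow> 'z) \<Rightarrow> (nat \<Rightarrow> 'q) \<Rightarrow> nat \<Rightarrow> nat \<Rightarrow> real" where
  "nu_t Z Q k lam Bf R By \<delta> zh xh m t =
     By * (\<Sum>s\<in>{s. 1 \<le> s \<and> t - m \<le> s \<and> s \<le> t - 1 \<and> s < t}.
             post_sd k lam (hist zh xh t) (zh s, xh s))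
     + beta_t (Z \<times> Q) k lam Bf R By \<delta> t"

end

theory Submission
  imports Defs "HOL-Analysis.Harmonic_Numbers" "HOL-Real_Asymp.Real_Asymp"
begin

text \<open>Work with the scaled reward \<open>\<rho> g\<close>, which the event \<open>E\<^sup>f(t)\<close> puts within \<open>\<nu> \<sigma>\<close> of the
  posterior mean. Call an action unsaturated if its regret is at most \<open>(1 + c) \<nu> \<sigma>\<close>, and let
  \<open>x\<^sub>b\<close> be the unsaturated action of least \<open>\<sigma>\<close> (the optimal action is unsaturated). With
  \<open>c = sqrt (2 ln (|Z| |Q| t\<^sup>2))\<close>, Gaussian tail bounds keep all samples within \<open>c \<nu> \<sigma>\<close> of the
  posterior mean except with probability \<open>O(1/t\<^sup>2)\<close>; there, since \<open>X\<close> beats \<open>x\<^sub>b\<close> in the sample,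
  the regret of \<open>X\<close> is at most \<open>(1 + c) \<nu> (2 \<sigma>(x\<^sub>b) + \<sigma>(X))\<close>. Anti-concentration makes the sample
  of the optimal action exceed its upper confidence bound with constant probability, which forces
  \<open>X\<close> to be unsaturated; hence \<open>E \<sigma>(X)\<close> dominates a constant times \<open>\<sigma>(x\<^sub>b)\<close>, and integrating
  the regret bound gives the claim.\<close>

definition normal_tail_bound :: "real \<Rightarrow> real" where
  "normal_tail_bound a = exp (- a\<^sup>2 / 2) / (a * sqrt (2 * pi))"

lemma normal_tail_bound_nonneg: "0 < a \<Longrightarrow> 0 \<le> normal_tail_bound a"
  unfolding normal_tail_bound_def by simp

lemma normal_tail_bound_sqrt_two_ln:
  fixes K :: real
  assumes "4 \<le> K"
  shows "0 < sqrt (2 * ln K)" and "normal_tail_bound (sqrt (2 * ln K)) \<le> 1 / (4 * K)"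
proof -
  define a where "a = sqrt (2 * ln K)"
  have "4/3 \<le> ln (4::real)"
    using ln2_ge_two_thirds ln_mult[of 2 2] by simp
  also have "\<dots> \<le> ln K" using assms by simp
  finally have "4/3 \<le> ln K" .
  then have "1.6\<^sup>2 \<le> 2 * ln K" by (simp add: power2_eq_square)
  then have a: "1.6 \<le> a" unfolding a_def by (rule real_le_rsqrt)
  then show "0 < sqrt (2 * ln K)" unfolding a_def by linarith
  have "2.5\<^sup>2 \<le> 2 * pi" using pi_approx by (simp add: power2_eq_square)
  then have "2.5 \<le> sqrt (2 * pi)" by (rule real_le_rsqrt)
  with a have "4 \<le> a * sqrt (2 * pi)" using mult_mono[of "1.6" a "2.5" "sqrt (2 * pi)"] by simp
  moreover have "exp (- a\<^sup>2 / 2) = 1 / K"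
    unfolding a_def using \<open>4/3 \<le> ln K\<close> assms by (simp add: exp_minus inverse_eq_divide)
  ultimately show "normal_tail_bound (sqrt (2 * ln K)) \<le> 1 / (4 * K)"
    unfolding normal_tail_bound_def a_def[symmetric] using assms
    by (simp add: divide_simps)
qed

lemma card_mult_normal_tail_bound_le:
  fixes N :: real and n t :: nat
  assumes "1 \<le> n" "n \<le> N" "2 \<le> t"
  shows "0 < sqrt (2 * ln (N * real t ^ 2))"
    and "n * normal_tail_bound (sqrt (2 * ln (N * real t ^ 2))) \<le> 1 / (4 * real t ^ 2)"
proof -
  have "4 \<le> real t ^ 2" using assms(3) power_mono[of 2 "real t" 2] by simp
  then have "4 \<le> N * real t ^ 2" using assms(1,2) mult_mono[of 1 N 4 "real t ^ 2"] by simp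
  note tail = normal_tail_bound_sqrt_two_ln[OF this]
  show "0 < sqrt (2 * ln (N * real t ^ 2))" by (rule tail(1))
  have "n * normal_tail_bound (sqrt (2 * ln (N * real t ^ 2)))
      \<le> N * normal_tail_bound (sqrt (2 * ln (N * real t ^ 2)))"
    using assms(2) normal_tail_bound_nonneg[OF tail(1)] by (rule mult_right_mono)
  also have "\<dots> \<le> 1 / (4 * real t ^ 2)"
    using tail(2) \<open>4 \<le> N * real t ^ 2\<close> assms(3) by (simp add: field_simps)
  finally show "n * normal_tail_bound (sqrt (2 * ln (N * real t ^ 2))) \<le> 1 / (4 * real t ^ 2)" .
qed

text \<open>Mills' inequality: on \<open>(a, \<infinity>)\<close> the standard normal density is at most \<open>x / a\<close> times
  itself, and \<open>x exp (-x\<^sup>2/2)\<close> has the antiderivative \<open>- exp (-x\<^sup>2/2)\<close>.\<close>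
lemma std_normal_upper_tail_nn_integral_le:
  fixes a :: real
  assumes a: "0 < a"
  shows "(\<integral>\<^sup>+x. ennreal (std_normal_density x) * indicator {a<..} x \<partial>lborel)
    \<le> ennreal (normal_tail_bound a)"
proof -
  define f where "f x = x * exp (- x\<^sup>2 / 2) / (a * sqrt (2 * pi))" for x :: real
  define F where "F x = - exp (- x\<^sup>2 / 2) / (a * sqrt (2 * pi))" for x :: real
  have "(\<integral>\<^sup>+x. ennreal (std_normal_density x) * indicator {a<..} x \<partial>lborel)
      \<le> (\<integral>\<^sup>+x. ennreal (f x) * indicator {a..} x \<partial>lborel)"
  proof (rule nn_integral_mono)
    fix x :: real
    have "a < x \<Longrightarrow> std_normal_density x \<le> f x"
      unfolding std_normal_density_def f_def using a by (simp add: field_simps)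
    then show "ennreal (std_normal_density x) * indicator {a<..} x \<le> ennreal (f x) * indicator {a..} x"
      by (auto simp: indicator_def ennreal_leI)
  qed
  also have "\<dots> = ennreal (0 - F a)"
  proof (rule nn_integral_FTC_atLeast)
    show "f \<in> borel_measurable borel" unfolding f_def by measurable
    fix x assume "a \<le> x"
    then show "DERIV F x :> f x" "0 \<le> f x"
      unfolding F_def f_def using a
      by (auto intro!: derivative_eq_intros simp: field_simps power2_eq_square)
  next
    have "((\<lambda>x::real. exp (- x\<^sup>2 / 2)) \<longlongrightarrow> 0) at_top" by real_asymp
    then have "((\<lambda>x::real. - exp (- x\<^sup>2 / 2) / (a * sqrt (2 * pi))) \<longlongrightarrow> - 0 / (a * sqrt (2 * pi))) at_top"
      by (intro tendsto_divide tendsto_minus tendsto_const) (use a in auto)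
    then show "(F \<longlongrightarrow> 0) at_top" unfolding F_def by simp
  qed
  also have "0 - F a = normal_tail_bound a"
    unfolding F_def normal_tail_bound_def by simp
  finally show ?thesis .
qed

lemma std_normal_density_antimono:
  assumes "0 \<le> x" "x \<le> y"
  shows "std_normal_density y \<le> std_normal_density x"
proof -
  have "x\<^sup>2 \<le> y\<^sup>2" using assms by (intro power_mono) auto
  then show ?thesis unfolding std_normal_density_def by (intro mult_left_mono) auto
qed

lemma std_normal_density_lower_sum_ge:
  "0.088 \<le> std_normal_density (3/2) / 2 + std_normal_density 2 / 2"
proof -
  have e: "exp 1 \<le> (2.72::real)" using e_less_272 by simp
  have "exp (1/8::real) \<le> 1 + 1/8 + (1/8)\<^sup>2" by (rule exp_bound) auto
  then have "exp (1 + 1/8::real) \<le> 2.72 * (1 + 1/8 + (1/8)\<^sup>2)"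
    unfolding exp_add using e by (intro mult_mono) auto
  then have e1: "exp (9/8::real) \<le> 3.11" by (simp add: power2_eq_square)
  have "exp (1 + 1::real) \<le> 2.72 * 2.72"
    unfolding exp_add using e by (intro mult_mono) auto
  then have e2: "exp (2::real) \<le> 7.4" by simp
  have "2 * pi \<le> (2.51::real)\<^sup>2" using pi_approx by (simp add: power2_eq_square)
  then have s: "sqrt (2 * pi) \<le> 2.51"
    using real_sqrt_le_mono[of "2 * pi" "2.51\<^sup>2"] by simp
  have "std_normal_density (3/2) / 2 + std_normal_density 2 / 2
      = (1 / exp (9/8) + 1 / exp 2) / (2 * sqrt (2 * pi))"
    by (simp add: std_normal_density_def power2_eq_square exp_minus field_simps)
  also have "\<dots> \<ge> (1 / 3.11 + 1 / 7.4) / (2 * 2.51)"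
    using e1 e2 s by (intro frac_le add_mono divide_left_mono) auto
  finally show ?thesis by simp
qed

text \<open>A lower Riemann sum of the decreasing density on \<open>[1, 2]\<close> with step \<open>1/2\<close>; the true value
  of \<open>P(N \<ge> 1)\<close> is about \<open>0.159\<close>.\<close>
lemma std_normal_tail_from_one_nn_integral_ge:
  "ennreal 0.088 \<le> (\<integral>\<^sup>+x. ennreal (std_normal_density x) * indicator {1..} x \<partial>lborel)"
proof -
  define step where "step x =
      ennreal (std_normal_density (3/2)) * indicator {1..3/2} x
    + ennreal (std_normal_density 2) * indicator {3/2<..2} x" for x :: real
  have "(\<integral>\<^sup>+x. step x \<partial>lborel)
      = ennreal (std_normal_density (3/2)) * emeasure lborel {1..3/2::real}
      + ennreal (std_normal_density 2) * emeasure lborel {3/2<..2::real}"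
    unfolding step_def by (subst nn_integral_add) (auto simp: nn_integral_cmult_indicator)
  also have "\<dots> = ennreal (std_normal_density (3/2) * (1/2)) + ennreal (std_normal_density 2 * (1/2))"
    by (simp only: emeasure_lborel_Icc emeasure_lborel_Ioc ennreal_mult[symmetric] normal_density_nonneg)
      simp_all
  also have "\<dots> = ennreal (std_normal_density (3/2) / 2 + std_normal_density 2 / 2)"
    by (subst ennreal_plus[symmetric]) auto
  finally have "ennreal 0.088 \<le> (\<integral>\<^sup>+x. step x \<partial>lborel)"
    using ennreal_leI[OF std_normal_density_lower_sum_ge] by simp
  also have "\<dots> \<le> (\<integral>\<^sup>+x. ennreal (std_normal_density x) * indicator {1..} x \<partial>lborel)"
  proof (rule nn_integral_mono)
    fix x :: real
    show "step x \<le> ennreal (std_normal_density x) * indicator {1..} x"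
      using std_normal_density_antimono[of x "3/2"] std_normal_density_antimono[of x 2]
      by (auto simp: step_def indicator_def ennreal_leI)
  qed
  finally show ?thesis .
qed

lemma gaussian_rv_variance_nonneg: "gaussian_rv M Y m v \<Longrightarrow> 0 \<le> v"
  unfolding gaussian_rv_def by auto

context prob_space
begin

lemma std_normal_upper_tail_le:
  assumes N: "distributed M lborel N std_normal_density" and "0 < a"
  shows "prob {\<omega>\<in>space M. a < N \<omega>} \<le> normal_tail_bound a"
proof -
  have "ennreal (prob {\<omega>\<in>space M. a < N \<omega>})
      = (\<integral>\<^sup>+x. ennreal (std_normal_density x) * indicator {a<..} x \<partial>lborel)"
    using distributed_emeasure[OF N, of "{a<..}"]
    by (simp add: emeasure_eq_measure vimage_def Int_def conj_commute)
  also have "\<dots> \<le> ennreal (normal_tail_bound a)"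
    by (rule std_normal_upper_tail_nn_integral_le) fact
  finally show ?thesis
    using normal_tail_bound_nonneg[OF \<open>0 < a\<close>] by (simp add: ennreal_le_iff)
qed

lemma std_normal_tail_from_one_ge:
  assumes N: "distributed M lborel N std_normal_density"
  shows "0.088 \<le> prob {\<omega>\<in>space M. 1 \<le> N \<omega>}"
proof -
  have "ennreal 0.088 \<le> (\<integral>\<^sup>+x. ennreal (std_normal_density x) * indicator {1..} x \<partial>lborel)"
    by (rule std_normal_tail_from_one_nn_integral_ge)
  also have "\<dots> = ennreal (prob {\<omega>\<in>space M. 1 \<le> N \<omega>})"
    using distributed_emeasure[OF N, of "{1..}"]
    by (simp add: emeasure_eq_measure vimage_def Int_def conj_commute)
  finally show ?thesis by (simp add: ennreal_le_iff)
qed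

lemma gaussian_rv_degenerate:
  assumes "gaussian_rv M Y m 0"
  shows "AE \<omega> in M. Y \<omega> = m"
  using assms unfolding gaussian_rv_def by auto

lemma gaussian_rv_standardize:
  assumes "gaussian_rv M Y m (\<tau>\<^sup>2)" and "0 < \<tau>"
  shows "distributed M lborel (\<lambda>\<omega>. (Y \<omega> - m) / \<tau>) std_normal_density"
proof -
  have "distributed M lborel Y (normal_density m \<tau>)"
    using assms unfolding gaussian_rv_def by auto
  then show ?thesis using normal_standard_normal_convert[OF \<open>0 < \<tau>\<close>] by simp
qed

lemma gaussian_rv_upper_tail_le:
  assumes Y: "gaussian_rv M Y m (\<tau>\<^sup>2)" and "0 \<le> \<tau>" "0 < a"
  shows "prob {\<omega>\<in>space M. m + a * \<tau> < Y \<omega>} \<le> normal_tail_bound a"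
proof (cases "\<tau> = 0")
  case True
  then have "AE \<omega> in M. \<not> m + a * \<tau> < Y \<omega>"
    using gaussian_rv_degenerate[of Y m] Y by auto
  then have "prob {\<omega>\<in>space M. m + a * \<tau> < Y \<omega>} = 0"
    by (rule prob_eq_0_AE)
  then show ?thesis using normal_tail_bound_nonneg[OF \<open>0 < a\<close>] by simp
next
  case False
  then have "0 < \<tau>" using \<open>0 \<le> \<tau>\<close> by simp
  then have "{\<omega>\<in>space M. m + a * \<tau> < Y \<omega>} = {\<omega>\<in>space M. a < (Y \<omega> - m) / \<tau>}"
    by (auto simp: pos_less_divide_eq algebra_simps)
  then show ?thesis
    using std_normal_upper_tail_le[OF gaussian_rv_standardize[OF Y \<open>0 < \<tau>\<close>] \<open>0 < a\<close>] by simp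
qed

lemma gaussian_rv_anti_concentration:
  assumes Y: "gaussian_rv M Y m (\<tau>\<^sup>2)" and "0 \<le> \<tau>"
  shows "0.088 \<le> prob {\<omega>\<in>space M. m + \<tau> \<le> Y \<omega>}"
proof (cases "\<tau> = 0")
  case True
  have "Y \<in> borel_measurable M" using Y unfolding gaussian_rv_def by simp
  moreover have "AE \<omega> in M. m + \<tau> \<le> Y \<omega>"
    using gaussian_rv_degenerate[of Y m] Y True by auto
  ultimately have "prob {\<omega>\<in>space M. m + \<tau> \<le> Y \<omega>} = 1"
    by (intro prob_eq_1[THEN iffD2]) auto
  then show ?thesis by simp
next
  case False
  then have "0 < \<tau>" using \<open>0 \<le> \<tau>\<close> by simp
  then have "{\<omega>\<in>space M. m + \<tau> \<le> Y \<omega>} = {\<omega>\<in>space M. 1 \<le> (Y \<omega> - m) / \<tau>}"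
    by (auto simp: pos_le_divide_eq algebra_simps)
  then show ?thesis
    using std_normal_tail_from_one_ge[OF gaussian_rv_standardize[OF Y \<open>0 < \<tau>\<close>]] by simp
qed

end

lemma gaussian_process_scaled_point:
  assumes gp: "gaussian_process M G W mu C" and "finite W" "w \<in> W"
  shows "gaussian_rv M (\<lambda>\<omega>. c * G \<omega> w) (c * mu w) (c\<^sup>2 * C w w)"
  using gp[unfolded gaussian_process_def, rule_format, of "\<lambda>u. of_bool (u = w) * c"] assms(2,3)
  by (simp add: mult.assoc power2_eq_square flip: sum_distrib_left)

lemma gaussian_process_scaled_point_sd:
  assumes "gaussian_process M G W mu (\<lambda>u v. \<nu>\<^sup>2 * C u v)" "finite W" "w \<in> W"
  shows "gaussian_rv M (\<lambda>\<omega>. a * G \<omega> w) (a * mu w) (a\<^sup>2 * (\<nu> * sqrt (C w w))\<^sup>2)"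
proof -
  note point = gaussian_process_scaled_point[OF assms]
  have "0 \<le> \<nu>\<^sup>2 * C w w" using gaussian_rv_variance_nonneg[OF point[of 1]] by simp
  then have "\<nu>\<^sup>2 * C w w = (\<nu> * sqrt (C w w))\<^sup>2"
    by (cases "\<nu> = 0") (auto simp: power_mult_distrib zero_le_mult_iff)
  then show ?thesis using point[of a] by simp
qed

lemma psd_kernel_quadratic_form_nonneg:
  assumes "psd_kernel W k" "finite W"
  shows "0 \<le> (\<Sum>u\<in>W. \<Sum>v\<in>W. a u * a v * k u v)"
proof -
  obtain ws where ws: "set ws = W" "distinct ws" using finite_distinct_list[OF \<open>finite W\<close>] by blast
  have bij: "bij_betw ((!) ws) {..<length ws} W" using ws by (intro bij_betw_nth) auto
  have "0 \<le> (\<Sum>i<length ws. \<Sum>j<length ws. a (ws ! i) * a (ws ! j) * k (ws ! i) (ws ! j))"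
    using assms(1) ws(1) unfolding psd_kernel_def by auto
  also have "\<dots> = (\<Sum>u\<in>W. \<Sum>j<length ws. a u * a (ws ! j) * k u (ws ! j))"
    by (rule sum.reindex_bij_betw[OF bij])
  also have "\<dots> = (\<Sum>u\<in>W. \<Sum>v\<in>W. a u * a v * k u v)"
    by (intro sum.cong refl sum.reindex_bij_betw[OF bij])
  finally show ?thesis .
qed

lemma quadratic_form_shift:
  fixes k :: "'w \<Rightarrow> 'w \<Rightarrow> real"
  assumes "finite W" "w \<in> W" and sym: "\<And>u. u \<in> W \<Longrightarrow> k u w = k w u"
  shows "(\<Sum>u\<in>W. \<Sum>v\<in>W. (a u - of_bool (u = w) * c) * (a v - of_bool (v = w) * c) * k u v)
    = (\<Sum>u\<in>W. \<Sum>v\<in>W. a u * a v * k u v) - 2 * c * (\<Sum>v\<in>W. a v * k w v) + c\<^sup>2 * k w w"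
proof -
  have "(\<Sum>u\<in>W. \<Sum>v\<in>W. (a u - of_bool (u = w) * c) * (a v - of_bool (v = w) * c) * k u v)
     = (\<Sum>u\<in>W. \<Sum>v\<in>W. a u * a v * k u v) - (\<Sum>u\<in>W. a u * (\<Sum>v\<in>W. of_bool (v = w) * (c * k u v)))
       - (\<Sum>u\<in>W. of_bool (u = w) * (c * (\<Sum>v\<in>W. a v * k u v)))
       + (\<Sum>u\<in>W. of_bool (u = w) * (c * (\<Sum>v\<in>W. of_bool (v = w) * (c * k u v))))"
    by (simp add: algebra_simps sum.distrib sum_subtractf sum_distrib_left)
  also have "\<dots> = (\<Sum>u\<in>W. \<Sum>v\<in>W. a u * a v * k u v) - (\<Sum>u\<in>W. a u * (c * k u w))
       - c * (\<Sum>v\<in>W. a v * k w v) + c * (c * k w w)"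
    using assms(1,2) by simp
  also have "(\<Sum>u\<in>W. a u * (c * k u w)) = c * (\<Sum>v\<in>W. a v * k w v)"
    using sym by (simp add: sum_distrib_left ac_simps)
  finally show ?thesis by (simp add: power2_eq_square)
qed

text \<open>Expanding \<open>0 \<le> \<parallel>h - g(w) k(\<cdot>, w)\<parallel>\<^sup>2\<close> for the representer \<open>h\<close> of \<open>g\<close> gives
  \<open>g(w)\<^sup>2 (2 - k(w, w)) \<le> \<parallel>h\<parallel>\<^sup>2\<close>.\<close>
lemma rkhs_norm_le_abs_le:
  assumes psd: "psd_kernel W k" and "finite W" and g: "rkhs_norm_le W k g B"
    and "w \<in> W" and "k w w \<le> 1"
  shows "\<bar>g w\<bar> \<le> B"
proof -
  obtain \<alpha> where g_eq: "\<forall>w\<in>W. g w = (\<Sum>v\<in>W. \<alpha> v * k w v)"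
    and norm_le: "sqrt (\<Sum>u\<in>W. \<Sum>v\<in>W. \<alpha> u * \<alpha> v * k u v) \<le> B"
    using g unfolding rkhs_norm_le_def by blast
  define A where "A = (\<Sum>u\<in>W. \<Sum>v\<in>W. \<alpha> u * \<alpha> v * k u v)"
  have sym: "\<And>u. u \<in> W \<Longrightarrow> k u w = k w u"
    using psd \<open>w \<in> W\<close> unfolding psd_kernel_def by blast
  have "0 \<le> (\<Sum>u\<in>W. \<Sum>v\<in>W. (\<alpha> u - of_bool (u = w) * g w) * (\<alpha> v - of_bool (v = w) * g w) * k u v)"
    by (rule psd_kernel_quadratic_form_nonneg[OF psd \<open>finite W\<close>])
  also have "\<dots> = A - (g w)\<^sup>2 * (2 - k w w)"
    using quadratic_form_shift[of W w k \<alpha> "g w", OF \<open>finite W\<close> \<open>w \<in> W\<close> sym] g_eq \<open>w \<in> W\<close>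
    by (simp add: A_def power2_eq_square algebra_simps)
  finally have "(g w)\<^sup>2 \<le> A"
    using \<open>k w w \<le> 1\<close> mult_left_mono[of 1 "2 - k w w" "(g w)\<^sup>2"] by simp
  then have "\<bar>g w\<bar> \<le> sqrt A" using real_le_rsqrt by simp
  then show ?thesis using norm_le unfolding A_def by linarith
qed

text \<open>The law of \<open>- G \<omega> x\<close> is assumed separately: it gives the lower tails of the samples, and a
  Gaussian process provides it directly.\<close>
locale thompson_sampling_round = prob_space M for M :: "'o measure" +
  fixes Q :: "'q set" and f m s :: "'q \<Rightarrow> real"
    and G :: "'o \<Rightarrow> 'q \<Rightarrow> real" and X :: "'o \<Rightarrow> 'q"
    and xstar :: 'q and c :: real
  assumes finite_Q: "finite Q" and xstar_in_Q: "xstar \<in> Q" and c_nonneg: "0 \<le> c"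
    and confidence: "x \<in> Q \<Longrightarrow> \<bar>m x - f x\<bar> \<le> s x"
    and sample_gaussian: "x \<in> Q \<Longrightarrow> gaussian_rv M (\<lambda>\<omega>. G \<omega> x) (m x) ((s x)\<^sup>2)"
    and neg_sample_gaussian: "x \<in> Q \<Longrightarrow> gaussian_rv M (\<lambda>\<omega>. - G \<omega> x) (- m x) ((s x)\<^sup>2)"
    and X_measurable: "X \<in> measurable M (count_space UNIV)"
    and X_in_Q: "\<omega> \<in> space M \<Longrightarrow> X \<omega> \<in> Q"
    and X_argmax: "\<omega> \<in> space M \<Longrightarrow> x \<in> Q \<Longrightarrow> G \<omega> x \<le> G \<omega> (X \<omega>)"
begin

definition unsaturated :: "'q set" where
  "unsaturated = {x\<in>Q. f xstar - f x \<le> (1 + c) * s x}"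

definition least_uncertain :: 'q where
  "least_uncertain = arg_min_on s unsaturated"

definition overshoot :: "'o set" where
  "overshoot = {\<omega>\<in>space M. \<exists>x\<in>Q. m x + c * s x < G \<omega> x}"

definition undershoot :: "'o set" where
  "undershoot = {\<omega>\<in>space M. G \<omega> least_uncertain < m least_uncertain - c * s least_uncertain}"

definition optimistic :: "'o set" where
  "optimistic = {\<omega>\<in>space M. m xstar + s xstar \<le> G \<omega> xstar}"

lemma s_nonneg: "x \<in> Q \<Longrightarrow> 0 \<le> s x"
  using confidence[of x] by (meson abs_ge_zero order_trans)

lemma G_measurable: "x \<in> Q \<Longrightarrow> (\<lambda>\<omega>. G \<omega> x) \<in> borel_measurable M"
  using sample_gaussian unfolding gaussian_rv_def by blast

lemma integrable_comp_X: "integrable M (\<lambda>\<omega>. h (X \<omega>) :: real)"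
proof (rule integrable_const_bound[where B = "\<Sum>x\<in>Q. \<bar>h x\<bar>"])
  show "AE \<omega> in M. norm (h (X \<omega>)) \<le> (\<Sum>x\<in>Q. \<bar>h x\<bar>)"
    using X_in_Q finite_Q by (auto intro!: AE_I2 member_le_sum)
  show "(\<lambda>\<omega>. h (X \<omega>)) \<in> borel_measurable M"
    using measurable_compose[OF X_measurable, of h borel] by simp
qed

lemma expected_s_nonneg: "0 \<le> (\<integral>\<omega>. s (X \<omega>) \<partial>M)"
  using X_in_Q s_nonneg by (intro integral_nonneg_AE AE_I2) auto

lemma least_uncertain_unsaturated: "least_uncertain \<in> unsaturated"
  and least_uncertain_le: "x \<in> unsaturated \<Longrightarrow> s least_uncertain \<le> s x"
proof -
  have "xstar \<in> unsaturated"
    using xstar_in_Q s_nonneg c_nonneg unfolding unsaturated_def by simp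
  moreover have "finite unsaturated" using finite_Q unfolding unsaturated_def by simp
  ultimately show "least_uncertain \<in> unsaturated" "x \<in> unsaturated \<Longrightarrow> s least_uncertain \<le> s x"
    unfolding least_uncertain_def using arg_min_if_finite[of unsaturated s] by (auto simp: not_less)
qed

lemma least_uncertain_in_Q: "least_uncertain \<in> Q"
  using least_uncertain_unsaturated unfolding unsaturated_def by simp

lemma sets_overshoot: "overshoot \<in> sets M"
  and sets_undershoot: "undershoot \<in> sets M"
  and sets_X_unsaturated: "{\<omega>\<in>space M. X \<omega> \<in> unsaturated} \<in> sets M"
proof -
  have [measurable]: "(\<lambda>\<omega>. G \<omega> x) \<in> borel_measurable M" if "x \<in> Q" for x
    using G_measurable that .
  note [measurable] = least_uncertain_in_Q
  have "{\<omega>\<in>space M. m x + c * s x < G \<omega> x} \<in> sets M" if "x \<in> Q" for x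
    using that by measurable
  then show "overshoot \<in> sets M"
    unfolding overshoot_def using finite_Q by (intro sets.sets_Collect_finite_Ex) auto
  show "undershoot \<in> sets M" unfolding undershoot_def by measurable
  show "{\<omega>\<in>space M. X \<omega> \<in> unsaturated} \<in> sets M"
    using measurable_sets[OF X_measurable, of unsaturated] by (simp add: vimage_def Int_def conj_commute)
qed

lemma prob_overshoot_le:
  assumes "0 < c"
  shows "prob overshoot \<le> card Q * normal_tail_bound c"
proof -
  have "overshoot = (\<Union>x\<in>Q. {\<omega>\<in>space M. m x + c * s x < G \<omega> x})"
    unfolding overshoot_def by auto
  then have "prob overshoot \<le> (\<Sum>x\<in>Q. prob {\<omega>\<in>space M. m x + c * s x < G \<omega> x})"
    using finite_Q G_measurable by (auto intro!: finite_measure_subadditive_finite)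
  also have "\<dots> \<le> card Q * normal_tail_bound c"
    using gaussian_rv_upper_tail_le[OF sample_gaussian s_nonneg \<open>0 < c\<close>]
    by (intro sum_bounded_above) auto
  finally show ?thesis .
qed

lemma prob_undershoot_le:
  assumes "0 < c"
  shows "prob undershoot \<le> normal_tail_bound c"
proof -
  have "undershoot = {\<omega>\<in>space M. - m least_uncertain + c * s least_uncertain < - G \<omega> least_uncertain}"
    unfolding undershoot_def by auto
  then show ?thesis
    using gaussian_rv_upper_tail_le[OF neg_sample_gaussian s_nonneg \<open>0 < c\<close>] least_uncertain_in_Q
    by simp
qed

lemma optimistic_subset: "optimistic \<subseteq> {\<omega>\<in>space M. X \<omega> \<in> unsaturated} \<union> overshoot"
proof
  fix \<omega> assume \<omega>: "\<omega> \<in> optimistic"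
  then have "\<omega> \<in> space M" unfolding optimistic_def by simp
  then have "X \<omega> \<in> Q" using X_in_Q by simp
  have "f xstar \<le> G \<omega> xstar"
    using \<omega> confidence[OF xstar_in_Q] unfolding optimistic_def by auto
  also have "\<dots> \<le> G \<omega> (X \<omega>)" by (rule X_argmax[OF \<open>\<omega> \<in> space M\<close> xstar_in_Q])
  finally have "\<omega> \<notin> overshoot \<Longrightarrow> f xstar - f (X \<omega>) \<le> (1 + c) * s (X \<omega>)"
    using confidence[OF \<open>X \<omega> \<in> Q\<close>] \<open>X \<omega> \<in> Q\<close> \<open>\<omega> \<in> space M\<close>
    unfolding overshoot_def by (force simp: algebra_simps)
  then show "\<omega> \<in> {\<omega>\<in>space M. X \<omega> \<in> unsaturated} \<union> overshoot"
    using \<open>X \<omega> \<in> Q\<close> \<open>\<omega> \<in> space M\<close> unfolding unsaturated_def by auto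
qed

lemma prob_X_unsaturated_ge: "0.088 - prob overshoot \<le> prob {\<omega>\<in>space M. X \<omega> \<in> unsaturated}"
proof -
  have "0.088 \<le> prob optimistic"
    unfolding optimistic_def
    by (rule gaussian_rv_anti_concentration[OF sample_gaussian[OF xstar_in_Q] s_nonneg[OF xstar_in_Q]])
  also have "\<dots> \<le> prob ({\<omega>\<in>space M. X \<omega> \<in> unsaturated} \<union> overshoot)"
    using optimistic_subset sets_X_unsaturated sets_overshoot by (intro finite_measure_mono) auto
  also have "\<dots> \<le> prob {\<omega>\<in>space M. X \<omega> \<in> unsaturated} + prob overshoot"
    using sets_X_unsaturated sets_overshoot by (intro measure_subadditive) (auto simp: emeasure_eq_measure)
  finally show ?thesis by simp
qed

lemma least_uncertain_mass_le:
  "s least_uncertain * prob {\<omega>\<in>space M. X \<omega> \<in> unsaturated} \<le> (\<integral>\<omega>. s (X \<omega>) \<partial>M)"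
proof -
  have "s least_uncertain * prob {\<omega>\<in>space M. X \<omega> \<in> unsaturated}
      = (\<integral>\<omega>. s least_uncertain * indicator {\<omega>\<in>space M. X \<omega> \<in> unsaturated} \<omega> \<partial>M)"
    using sets_X_unsaturated by simp
  also have "\<dots> \<le> (\<integral>\<omega>. s (X \<omega>) \<partial>M)"
  proof (rule integral_mono)
    show "integrable M (\<lambda>\<omega>. s least_uncertain * indicator {\<omega>\<in>space M. X \<omega> \<in> unsaturated} \<omega>)"
      using sets_X_unsaturated by (intro integrable_mult_right integrable_real_indicator) (auto simp: less_top[symmetric])
    fix \<omega> assume "\<omega> \<in> space M"
    then show "s least_uncertain * indicator {\<omega>\<in>space M. X \<omega> \<in> unsaturated} \<omega> \<le> s (X \<omega>)"
      using least_uncertain_le s_nonneg X_in_Q by (auto simp: indicator_def)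
  qed (rule integrable_comp_X)
  finally show ?thesis .
qed

text \<open>Away from the two bad events, the sample ranks \<open>X \<omega>\<close> above \<open>least_uncertain\<close>, whose
  own regret is controlled because it is unsaturated.\<close>
lemma regret_le_off_bad_events:
  assumes "\<omega> \<in> space M" "\<omega> \<notin> overshoot" "\<omega> \<notin> undershoot"
  shows "f xstar - f (X \<omega>) \<le> (1 + c) * (2 * s least_uncertain + s (X \<omega>))"
proof -
  let ?b = least_uncertain and ?x = "X \<omega>"
  have "?x \<in> Q" using X_in_Q assms(1) by simp
  have "f xstar - f ?b \<le> (1 + c) * s ?b"
    using least_uncertain_unsaturated unfolding unsaturated_def by simp
  moreover have "f ?b \<le> G \<omega> ?b + (1 + c) * s ?b"
    using confidence[OF least_uncertain_in_Q] assms(1,3) unfolding undershoot_def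
    by (auto simp: algebra_simps)
  moreover have "G \<omega> ?b \<le> G \<omega> ?x" by (rule X_argmax[OF assms(1) least_uncertain_in_Q])
  moreover have "G \<omega> ?x \<le> f ?x + (1 + c) * s ?x"
    using confidence[OF \<open>?x \<in> Q\<close>] \<open>?x \<in> Q\<close> assms(1,2) unfolding overshoot_def
    by (force simp: algebra_simps)
  ultimately show ?thesis by (simp add: algebra_simps)
qed

lemma expected_regret_le_max:
  fixes D :: real
  assumes "\<forall>x\<in>Q. f xstar - f x \<le> D"
  shows "(\<integral>\<omega>. f xstar - f (X \<omega>) \<partial>M) \<le> D"
proof -
  have "(\<integral>\<omega>. f xstar - f (X \<omega>) \<partial>M) \<le> (\<integral>\<omega>. D \<partial>M)"
    using assms X_in_Q by (intro integral_mono integrable_comp_X) auto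
  then show ?thesis by (simp add: prob_space)
qed

lemma prob_bad_events_le:
  assumes "0 < c"
  shows "prob (overshoot \<union> undershoot) \<le> (card Q + 1) * normal_tail_bound c"
proof -
  have "prob (overshoot \<union> undershoot) \<le> prob overshoot + prob undershoot"
    using sets_overshoot sets_undershoot by (intro measure_subadditive) (auto simp: emeasure_eq_measure)
  then show ?thesis
    using prob_overshoot_le[OF assms] prob_undershoot_le[OF assms] by (simp add: algebra_simps)
qed

lemma expected_regret_le_least_uncertain:
  fixes D :: real
  assumes regret_le: "\<forall>x\<in>Q. f xstar - f x \<le> D"
  shows "(\<integral>\<omega>. f xstar - f (X \<omega>) \<partial>M)
    \<le> (1 + c) * (2 * s least_uncertain + (\<integral>\<omega>. s (X \<omega>) \<partial>M)) + D * prob (overshoot \<union> undershoot)"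
proof -
  define bad where "bad = overshoot \<union> undershoot"
  let ?b = least_uncertain
  have sets_bad: "bad \<in> sets M" unfolding bad_def using sets_overshoot sets_undershoot by simp
  have integrable_bad: "integrable M (\<lambda>\<omega>. D * indicator bad \<omega>)"
    using sets_bad by (intro integrable_mult_right integrable_real_indicator) (auto simp: less_top[symmetric])
  have "(\<integral>\<omega>. f xstar - f (X \<omega>) \<partial>M)
      \<le> (\<integral>\<omega>. (1 + c) * (2 * s ?b + s (X \<omega>)) + D * indicator bad \<omega> \<partial>M)"
  proof (rule integral_mono)
    fix \<omega> assume "\<omega> \<in> space M"
    then have "X \<omega> \<in> Q" by (rule X_in_Q)
    then have "0 \<le> (1 + c) * (2 * s ?b + s (X \<omega>))"
      using s_nonneg least_uncertain_in_Q c_nonneg by simp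
    then show "f xstar - f (X \<omega>) \<le> (1 + c) * (2 * s ?b + s (X \<omega>)) + D * indicator bad \<omega>"
      using regret_le_off_bad_events[OF \<open>\<omega> \<in> space M\<close>] regret_le \<open>X \<omega> \<in> Q\<close>
      by (cases "\<omega> \<in> bad") (auto simp: bad_def)
  qed (use integrable_comp_X in \<open>auto intro!: Bochner_Integration.integrable_add integrable_bad\<close>)
  also have "\<dots> = (1 + c) * (2 * s ?b + (\<integral>\<omega>. s (X \<omega>) \<partial>M)) + D * prob bad"
    using integrable_comp_X integrable_bad sets_bad by (simp add: prob_space algebra_simps)
  finally show ?thesis unfolding bad_def .
qed

theorem expected_regret_le:
  fixes D :: real
  assumes "0 < c" and small_tail: "card Q * normal_tail_bound c < 0.088"
    and regret_le: "\<forall>x\<in>Q. f xstar - f x \<le> D"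
  shows "(\<integral>\<omega>. f xstar - f (X \<omega>) \<partial>M)
    \<le> (1 + 2 / (0.088 - card Q * normal_tail_bound c)) * (1 + c) * (\<integral>\<omega>. s (X \<omega>) \<partial>M)
      + D * (card Q + 1) * normal_tail_bound c"
proof -
  define T where "T = normal_tail_bound c"
  define q where "q = 0.088 - card Q * T"
  define S where "S = (\<integral>\<omega>. s (X \<omega>) \<partial>M)"
  have "0 < q" using small_tail unfolding q_def T_def by simp
  have "q \<le> prob {\<omega>\<in>space M. X \<omega> \<in> unsaturated}"
    using prob_X_unsaturated_ge prob_overshoot_le[OF \<open>0 < c\<close>] unfolding q_def T_def by simp
  then have "s least_uncertain * q \<le> S"
    using least_uncertain_mass_le s_nonneg[OF least_uncertain_in_Q] unfolding S_def
    by (meson mult_left_mono order_trans)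
  then have "s least_uncertain \<le> S / q" using \<open>0 < q\<close> by (simp add: pos_le_divide_eq)
  moreover have "0 \<le> D" using regret_le xstar_in_Q by auto
  ultimately have "(1 + c) * (2 * s least_uncertain + S) + D * prob (overshoot \<union> undershoot)
      \<le> (1 + c) * (2 * (S / q) + S) + D * ((card Q + 1) * T)"
    using prob_bad_events_le[OF \<open>0 < c\<close>] c_nonneg unfolding T_def
    by (intro add_mono mult_left_mono) auto
  with expected_regret_le_least_uncertain[OF regret_le] show ?thesis
    unfolding q_def T_def S_def by (simp add: algebra_simps)
qed

lemma expected_regret_le_sqrt_log:
  fixes D K N :: real and t :: nat
  assumes "80 \<le> K" and "card Q \<le> N" and "1 \<le> t" and c_eq: "c = sqrt (2 * ln (N * real t ^ 2))"
    and regret_le: "\<forall>x\<in>Q. f xstar - f x \<le> D"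
  shows "(\<integral>\<omega>. f xstar - f (X \<omega>) \<partial>M) \<le> K * (1 + c) * (\<integral>\<omega>. s (X \<omega>) \<partial>M) + D / real t ^ 2"
proof (cases "t = 1")
  case True
  have "0 \<le> K * (1 + c) * (\<integral>\<omega>. s (X \<omega>) \<partial>M)"
    using \<open>80 \<le> K\<close> expected_s_nonneg c_nonneg by simp
  then show ?thesis using expected_regret_le_max[OF regret_le] True by simp
next
  case False
  define T where "T = normal_tail_bound c"
  have "1 \<le> card Q" using finite_Q xstar_in_Q by (auto simp: Suc_le_eq card_gt_0_iff)
  note tail = card_mult_normal_tail_bound_le[OF this \<open>card Q \<le> N\<close>, of t, folded c_eq T_def]
  have "2 \<le> t" "4 \<le> real t ^ 2"
    using \<open>1 \<le> t\<close> False power_mono[of 2 "real t" 2] by auto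
  note QT = tail(2)[OF \<open>2 \<le> t\<close>]
  have "0 \<le> T" unfolding T_def by (rule normal_tail_bound_nonneg[OF tail(1)[OF \<open>2 \<le> t\<close>]])
  have "card Q * T \<le> 1 / 16"
    using QT \<open>4 \<le> real t ^ 2\<close> by (smt (verit, best) divide_left_mono mult_pos_pos)
  then have "1 + 2 / (0.088 - card Q * T) \<le> 80" by (simp add: field_simps)
  then have "1 + 2 / (0.088 - card Q * T) \<le> K" using \<open>80 \<le> K\<close> by linarith
  then have "(1 + 2 / (0.088 - card Q * T)) * (1 + c) * (\<integral>\<omega>. s (X \<omega>) \<partial>M)
      \<le> K * (1 + c) * (\<integral>\<omega>. s (X \<omega>) \<partial>M)"
    using expected_s_nonneg c_nonneg by (intro mult_right_mono) auto
  moreover have "D * (card Q + 1) * T \<le> D / real t ^ 2"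
  proof -
    have "(card Q + 1) * T \<le> 2 * (card Q * T)"
      using \<open>1 \<le> card Q\<close> \<open>0 \<le> T\<close> mult_right_mono[of 1 "card Q" T] by (simp add: algebra_simps)
    also have "\<dots> \<le> 2 * (1 / (4 * real t ^ 2))" using QT by linarith
    also have "\<dots> \<le> 1 / real t ^ 2" by (simp add: divide_simps)
    finally show ?thesis
      using regret_le xstar_in_Q mult_left_mono[of _ _ D] by (force simp: mult.assoc)
  qed
  moreover have "card Q * T < 0.088" using \<open>card Q * T \<le> 1 / 16\<close> by simp
  ultimately show ?thesis
    using expected_regret_le[OF tail(1)[OF \<open>2 \<le> t\<close>] _ regret_le] unfolding T_def by linarith
qed

end

lemma gaussian_process_thompson_sampling_round:
  fixes G :: "'o \<Rightarrow> 'z \<times> 'q \<Rightarrow> real"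
  assumes "prob_space M" "finite Z" "finite Q" "z \<in> Z" "xstar \<in> Q" "0 \<le> c"
    and gp: "gaussian_process M G (Z \<times> Q) \<mu> (\<lambda>u v. \<nu>\<^sup>2 * C u v)"
    and confidence: "\<forall>w\<in>Z \<times> Q. \<bar>\<mu> w - \<rho> * g w\<bar> \<le> \<nu> * sqrt (C w w)"
    and "X \<in> measurable M (count_space UNIV)"
    and "\<forall>\<omega>\<in>space M. X \<omega> \<in> Q \<and> (\<forall>x\<in>Q. G \<omega> (z, x) \<le> G \<omega> (z, X \<omega>))"
  shows "thompson_sampling_round M Q (\<lambda>x. \<rho> * g (z, x)) (\<lambda>x. \<mu> (z, x))
    (\<lambda>x. \<nu> * sqrt (C (z, x) (z, x))) (\<lambda>\<omega> x. G \<omega> (z, x)) X xstar c"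
proof (intro thompson_sampling_round.intro thompson_sampling_round_axioms.intro)
  fix x assume "x \<in> Q"
  then have "(z, x) \<in> Z \<times> Q" using \<open>z \<in> Z\<close> by simp
  note sample = gaussian_process_scaled_point_sd[OF gp _ this]
  show "\<bar>\<mu> (z, x) - \<rho> * g (z, x)\<bar> \<le> \<nu> * sqrt (C (z, x) (z, x))"
    using confidence \<open>(z, x) \<in> Z \<times> Q\<close> by blast
  show "gaussian_rv M (\<lambda>\<omega>. G \<omega> (z, x)) (\<mu> (z, x)) ((\<nu> * sqrt (C (z, x) (z, x)))\<^sup>2)"
    using sample[of 1] \<open>finite Z\<close> \<open>finite Q\<close> by simp
  show "gaussian_rv M (\<lambda>\<omega>. - G \<omega> (z, x)) (- \<mu> (z, x)) ((\<nu> * sqrt (C (z, x) (z, x)))\<^sup>2)"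
    using sample[of "-1"] \<open>finite Z\<close> \<open>finite Q\<close> by simp
qed (use assms in auto)

lemma gaussian_process_thompson_sampling_regret_le:
  fixes G :: "'o \<Rightarrow> 'z \<times> 'q \<Rightarrow> real" and D K :: real and t :: nat
  assumes "80 \<le> K" "prob_space M" "finite Z" "Z \<noteq> {}" "finite Q" "z \<in> Z" "xstar \<in> Q" "1 \<le> t"
    and "gaussian_process M G (Z \<times> Q) \<mu> (\<lambda>u v. \<nu>\<^sup>2 * C u v)"
    and "\<forall>w\<in>Z \<times> Q. \<bar>\<mu> w - \<rho> * g w\<bar> \<le> \<nu> * sqrt (C w w)"
    and "X \<in> measurable M (count_space UNIV)"
    and "\<forall>\<omega>\<in>space M. X \<omega> \<in> Q \<and> (\<forall>x\<in>Q. G \<omega> (z, x) \<le> G \<omega> (z, X \<omega>))"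
    and "\<forall>x\<in>Q. \<rho> * g (z, xstar) - \<rho> * g (z, x) \<le> D"
  shows "(\<integral>\<omega>. \<rho> * g (z, xstar) - \<rho> * g (z, X \<omega>) \<partial>M)
    \<le> K * (1 + sqrt (2 * ln (real (card Z) * real (card Q) * real t ^ 2)))
        * (\<integral>\<omega>. \<nu> * sqrt (C (z, X \<omega>) (z, X \<omega>)) \<partial>M) + D / real t ^ 2"
proof -
  define c where "c = sqrt (2 * ln (real (card Z) * real (card Q) * real t ^ 2))"
  have "1 \<le> real (card Z)" "1 \<le> real (card Q)"
    using assms(3-7) by (auto simp: Suc_le_eq card_gt_0_iff)
  then have "card Q \<le> real (card Z) * real (card Q)"
    using mult_right_mono[of 1 "real (card Z)" "real (card Q)"] by simp
  have "1 \<le> real (card Z) * real (card Q) * real t ^ 2"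
    using \<open>1 \<le> real (card Z)\<close> \<open>1 \<le> real (card Q)\<close> \<open>1 \<le> t\<close> by (intro mult_ge1_I one_le_power) auto
  then have "0 \<le> c" unfolding c_def by simp
  interpret thompson_sampling_round M Q "\<lambda>x. \<rho> * g (z, x)" "\<lambda>x. \<mu> (z, x)"
      "\<lambda>x. \<nu> * sqrt (C (z, x) (z, x))" "\<lambda>\<omega> x. G \<omega> (z, x)" X xstar c
    using assms \<open>0 \<le> c\<close> by (intro gaussian_process_thompson_sampling_round) assumption+
  show ?thesis
    using expected_regret_le_sqrt_log[OF \<open>80 \<le> K\<close> \<open>real (card Q) \<le> _\<close> \<open>1 \<le> t\<close> c_def assms(13)]
    unfolding c_def .
qed

lemma eighty_le_44_exp_sqrt_pi: "80 \<le> 44 * exp 1 * sqrt pi"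
proof -
  have "2 \<le> exp (1::real)" using exp_ge_add_one_self[of 1] by simp
  moreover have "1.7 \<le> sqrt pi" using pi_gt3 by (intro real_le_rsqrt) (simp add: power2_eq_square)
  ultimately have "2 * 1.7 \<le> exp 1 * sqrt pi" by (intro mult_mono) auto
  then show ?thesis by (simp only: mult.assoc)
qed

theorem lemma11:
  fixes Z :: "(real ^ 'a) set" and Q :: "(real ^ 'b) set"
    and k :: "(real ^ 'a) \<times> (real ^ 'b) \<Rightarrow> (real ^ 'a) \<times> (real ^ 'b) \<Rightarrow> real"
    and g :: "(real ^ 'a) \<times> (real ^ 'b) \<Rightarrow> real"
    and Bf By R lam \<delta> :: real
    and D :: "nat pmf" and m t :: nat
    and zh :: "nat \<Rightarrow> real ^ 'a" and xh :: "nat \<Rightarrow> real ^ 'b"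
    and y :: "nat \<Rightarrow> real" and d :: "nat \<Rightarrow> nat"
    and z :: "real ^ 'a" and xstar :: "real ^ 'b"
    and M :: "'o measure" and G :: "'o \<Rightarrow> (real ^ 'a) \<times> (real ^ 'b) \<Rightarrow> real"
    and X :: "'o \<Rightarrow> real ^ 'b"
  defines "\<rho> \<equiv> measure_pmf.prob D {..m}"
    and "\<mu> \<equiv> post_mean k lam (hist zh xh t) (tilde_obs y d m t)"
    and "\<sigma> \<equiv> post_sd k lam (hist zh xh t)"
    and "\<nu> \<equiv> nu_t Z Q k lam Bf R By \<delta> zh xh m t"
    and "p \<equiv> 1 / (4 * exp 1 * sqrt pi)"
  assumes "finite Z" "Z \<noteq> {}" "finite Q" "Q \<noteq> {}"
    and "psd_kernel (Z \<times> Q) k" "\<forall>u\<in>(Z \<times> Q). \<forall>v\<in>(Z \<times> Q). k u v \<le> 1"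
    and "rkhs_norm_le (Z \<times> Q) k g Bf"
    and "lam > 0" "By \<ge> 0" "0 < \<delta>" "\<delta> < 1" "R \<ge> 0"
    and "m \<ge> 1" "t \<ge> 1" "\<rho> > 0"
    and "\<forall>s\<in>{1..<t}. zh s \<in> Z \<and> xh s \<in> Q \<and> \<bar>y s\<bar> \<le> By"
    \<comment> \<open>given context and optimal action\<close>
    and "z \<in> Z" "xstar \<in> Q" "\<forall>x\<in>Q. g (z, x) \<le> g (z, xstar)"
    \<comment> \<open>event E^f(t)\<close>
    and "\<forall>w\<in>(Z \<times> Q). \<bar>\<mu> w - \<rho> * g w\<bar> \<le> \<nu> * \<sigma> w"
    \<comment> \<open>GP-TS sampling and action selection, conditionally on the history\<close>
    and "prob_space M"
    and "gaussian_process M G (Z \<times> Q) \<mu> (\<lambda>u v. \<nu>\<^sup>2 * post_cov k lam (hist zh xh t) u v)"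
    and "X \<in> measurable M (count_space UNIV)"
    and "\<forall>\<omega>\<in>space M. X \<omega> \<in> Q \<and> (\<forall>x\<in>Q. G \<omega> (z, x) \<le> G \<omega> (z, X \<omega>))"
  shows "(\<integral>\<omega>. g (z, xstar) - g (z, X \<omega>) \<partial>M)
      \<le> 11 * (\<nu> * (1 + sqrt (2 * ln (real (card Z) * real (card Q) * real t ^ 2)))) / (\<rho> * p) * (\<integral>\<omega>. \<sigma> (z, X \<omega>) \<partial>M) + 2 * Bf / real t ^ 2"
proof -
  define c where "c = sqrt (2 * ln (real (card Z) * real (card Q) * real t ^ 2))"
  have g_bound: "\<bar>g w\<bar> \<le> Bf" if "w \<in> Z \<times> Q" for w
    using rkhs_norm_le_abs_le[OF \<open>psd_kernel (Z \<times> Q) k\<close> _ \<open>rkhs_norm_le (Z \<times> Q) k g Bf\<close> that]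
      \<open>\<forall>u\<in>Z \<times> Q. \<forall>v\<in>Z \<times> Q. k u v \<le> 1\<close> \<open>finite Z\<close> \<open>finite Q\<close> that by simp
  have "\<forall>x\<in>Q. \<rho> * g (z, xstar) - \<rho> * g (z, x) \<le> \<rho> * (2 * Bf)"
    unfolding right_diff_distrib[symmetric] using \<open>\<rho> > 0\<close>
  proof (intro ballI mult_left_mono)
    show "g (z, xstar) - g (z, x) \<le> 2 * Bf" if "x \<in> Q" for x
      using g_bound[of "(z, x)"] g_bound[of "(z, xstar)"] that \<open>z \<in> Z\<close> \<open>xstar \<in> Q\<close>
      by (simp add: abs_le_iff)
  qed simp
  note regret_le = gaussian_process_thompson_sampling_regret_le[OF eighty_le_44_exp_sqrt_pi
      \<open>prob_space M\<close> \<open>finite Z\<close> \<open>Z \<noteq> {}\<close> \<open>finite Q\<close> \<open>z \<in> Z\<close> \<open>xstar \<in> Q\<close> \<open>t \<ge> 1\<close>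
      \<open>gaussian_process M G _ _ _\<close>
      \<open>\<forall>w\<in>Z \<times> Q. \<bar>\<mu> w - \<rho> * g w\<bar> \<le> \<nu> * \<sigma> w\<close>[unfolded \<sigma>_def post_sd_def]
      \<open>X \<in> measurable M (count_space UNIV)\<close>
      \<open>\<forall>\<omega>\<in>space M. X \<omega> \<in> Q \<and> _\<close> this, folded post_sd_def \<sigma>_def c_def]
  have "\<rho> * (\<integral>\<omega>. g (z, xstar) - g (z, X \<omega>) \<partial>M)
      = (\<integral>\<omega>. \<rho> * g (z, xstar) - \<rho> * g (z, X \<omega>) \<partial>M)"
    by (simp flip: right_diff_distrib)
  also have "\<dots> \<le> 44 * exp 1 * sqrt pi * (1 + c) * (\<integral>\<omega>. \<nu> * \<sigma> (z, X \<omega>) \<partial>M)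
      + \<rho> * (2 * Bf) / real t ^ 2"
    by (rule regret_le)
  finally show ?thesis
    using \<open>\<rho> > 0\<close> unfolding c_def[symmetric] p_def by (simp add: field_simps)
qed

end
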